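(* Let $K$ be a compact group and $K_1,\dots,K_n$ subgroups of $K$ such that $K=(K_1K_2\cdots K_n)^N$ for some $N\in\mathbb{N}^*$. Then for any finite-dimensional unitary representation $(V,\tau)$ of $K$ without non-zero invariant vector, any $x\in V$, and any $y_1,\dots,y_n\in V$ with $y_i$ invariant under $K_i$ for each $i$, we have $$\|x\|_V\leq 2nN\max_{1\leq i\leq n}\|x-y_i\|_V.$$
   Context: $(K_1K_2\cdots K_n)^N$ denotes the set of products $(k_{11}\cdots k_{n1})\cdots(k_{1N}\cdots k_{nN})$ with $k_{ij}\in K_i$. Representations are continuous. *)

theory Defs
  imports "HOL-Analysis.Analysis" "HOL-Algebra.Group"
begin

definition compact_group :: "('g, 'b) monoid_scheme \<Rightarrow> 'g topology \<Rightarrow> bool" where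
  "compact_group G T \<longleftrightarrow> group G \<and> topspace T = carrier G \<and> compact_space T \<and> Hausdorff_space T
     \<and> continuous_map (prod_topology T T) T (\<lambda>(a, b). a \<otimes>\<^bsub>G\<^esub> b)
     \<and> continuous_map T T (\<lambda>a. inv\<^bsub>G\<^esub> a)"

definition unitary_op :: "(complex ^ 'n \<Rightarrow> complex ^ 'n) \<Rightarrow> bool" where
  "unitary_op f \<longleftrightarrow> (\<forall>u v. f (u + v) = f u + f v) \<and> (\<forall>(c::complex) u. f (c *s u) = c *s f u)
     \<and> (\<forall>u. norm (f u) = norm u) \<and> bij f"

definition unitary_rep :: "('g, 'b) monoid_scheme \<Rightarrow> 'g topology \<Rightarrow> ('g \<Rightarrow> complex ^ 'n \<Rightarrow> complex ^ 'n) \<Rightarrow> bool" where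
  "unitary_rep G T \<tau> \<longleftrightarrow> (\<forall>g \<in> carrier G. unitary_op (\<tau> g))
     \<and> (\<forall>g \<in> carrier G. \<forall>h \<in> carrier G. \<tau> (g \<otimes>\<^bsub>G\<^esub> h) = \<tau> g \<circ> \<tau> h)
     \<and> \<tau> \<one>\<^bsub>G\<^esub> = id
     \<and> (\<forall>v. continuous_map T euclidean (\<lambda>g. \<tau> g v))"

text \<open>(K_1 K_2 ... K_n)^N: products k_{11}...k_{n1} ... k_{1N}...k_{nN}, written as the
  product of a list of length n*N whose j-th entry (0-based) lies in K_{(j mod n)+1}.\<close>
definition prod_power_set :: "('g, 'b) monoid_scheme \<Rightarrow> (nat \<Rightarrow> 'g set) \<Rightarrow> nat \<Rightarrow> nat \<Rightarrow> 'g set" where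
  "prod_power_set G Ks n N = {foldr (\<lambda>a b. a \<otimes>\<^bsub>G\<^esub> b) ks \<one>\<^bsub>G\<^esub> | ks.
       length ks = n * N \<and> (\<forall>j < n * N. ks ! j \<in> Ks (j mod n + 1))}"

end

theory Submission
  imports Defs
begin

text \<open>Each element of \<open>K\<^sub>i\<close> fixes \<open>y\<^sub>i\<close> and hence moves \<open>x\<close> by at most \<open>2 \<parallel>x - y\<^sub>i\<parallel>\<close>;
  writing an arbitrary element of \<open>K\<close> as a word of length \<open>nN\<close> in the \<open>K\<^sub>i\<close>, every point
  of the orbit of \<open>x\<close> lies within \<open>R = 2nN max\<^sub>i \<parallel>x - y\<^sub>i\<parallel>\<close> of \<open>x\<close>. The point of the closed
  convex hull of the orbit closest to \<open>0\<close> is unique, hence \<open>K\<close>-invariant, hence \<open>0\<close>; so \<open>0\<close>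
  lies in that hull, which is contained in the ball of radius \<open>R\<close> around \<open>x\<close>.\<close>

lemma unitary_op_diff:
  assumes "unitary_op f" shows "f (u - v) = f u - f v"
proof -
  have "f ((u - v) + v) = f (u - v) + f v" using assms unfolding unitary_op_def by blast
  then show ?thesis by (simp add: algebra_simps)
qed

lemma unitary_op_norm:
  assumes "unitary_op f" shows "norm (f u) = norm u"
  using assms unfolding unitary_op_def by blast

lemma unitary_op_linear:
  assumes "unitary_op (f :: complex ^ 'n \<Rightarrow> complex ^ 'n)" shows "linear f"
proof (rule linearI)
  show "f (u + v) = f u + f v" for u v using assms unfolding unitary_op_def by blast
next
  fix r :: real and u :: "complex ^ 'n"
  have "\<And>w :: complex ^ 'n. r *\<^sub>R w = complex_of_real r *s w"
    by (simp add: vec_eq_iff) (simp add: scaleR_conv_of_real)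
  then show "f (r *\<^sub>R u) = r *\<^sub>R f u" using assms unfolding unitary_op_def by metis
qed

lemma unitary_op_displacement_le:
  assumes "unitary_op f" and "f y = y"
  shows "norm (f x - x) \<le> 2 * norm (x - y)"
proof -
  have "f x - x = f (x - y) + (y - x)" using unitary_op_diff[OF assms(1)] assms(2) by simp
  then have "norm (f x - x) \<le> norm (f (x - y)) + norm (y - x)" by (metis norm_triangle_ineq)
  then show ?thesis using unitary_op_norm[OF assms(1)] by (simp add: norm_minus_commute)
qed

lemma foldr_mult_closed:
  assumes "monoid G" and "set ks \<subseteq> carrier G"
  shows "foldr (\<lambda>a b. a \<otimes>\<^bsub>G\<^esub> b) ks \<one>\<^bsub>G\<^esub> \<in> carrier G"
  using assms(2) by (induction ks) (auto intro: monoid.m_closed[OF assms(1)] monoid.one_closed[OF assms(1)])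

lemma foldr_mult_displacement_le:
  assumes "monoid G"
    and unitary: "\<And>g. g \<in> carrier G \<Longrightarrow> unitary_op (\<tau> g)"
    and hom: "\<And>g h. g \<in> carrier G \<Longrightarrow> h \<in> carrier G \<Longrightarrow> \<tau> (g \<otimes>\<^bsub>G\<^esub> h) = \<tau> g \<circ> \<tau> h"
    and "\<tau> \<one>\<^bsub>G\<^esub> = id"
    and "set ks \<subseteq> carrier G"
    and "\<And>k. k \<in> set ks \<Longrightarrow> norm (\<tau> k x - x) \<le> d"
  shows "norm (\<tau> (foldr (\<lambda>a b. a \<otimes>\<^bsub>G\<^esub> b) ks \<one>\<^bsub>G\<^esub>) x - x) \<le> real (length ks) * d"
  using assms(5,6)
proof (induction ks)
  case Nil
  then show ?case using \<open>\<tau> \<one>\<^bsub>G\<^esub> = id\<close> by simp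
next
  case (Cons k ks)
  define r where "r = foldr (\<lambda>a b. a \<otimes>\<^bsub>G\<^esub> b) ks \<one>\<^bsub>G\<^esub>"
  have k: "k \<in> carrier G" "norm (\<tau> k x - x) \<le> d" using Cons.prems by auto
  have r: "r \<in> carrier G" "norm (\<tau> r x - x) \<le> real (length ks) * d"
    using Cons foldr_mult_closed[OF \<open>monoid G\<close>] unfolding r_def by auto
  have "\<tau> (k \<otimes>\<^bsub>G\<^esub> r) x - x = \<tau> k (\<tau> r x - x) + (\<tau> k x - x)"
    using hom[OF k(1) r(1)] unitary_op_diff[OF unitary[OF k(1)]] by simp
  then have "norm (\<tau> (k \<otimes>\<^bsub>G\<^esub> r) x - x) \<le> norm (\<tau> k (\<tau> r x - x)) + norm (\<tau> k x - x)"
    by (metis norm_triangle_ineq)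
  also have "\<dots> \<le> real (length ks) * d + d" using unitary_op_norm[OF unitary[OF k(1)]] r k by simp
  finally show ?case unfolding r_def by (simp add: distrib_right)
qed

lemma prod_power_set_word:
  assumes "g \<in> prod_power_set G Ks n N" and "n \<ge> 1"
  obtains ks where "g = foldr (\<lambda>a b. a \<otimes>\<^bsub>G\<^esub> b) ks \<one>\<^bsub>G\<^esub>" and "length ks = n * N"
    and "\<And>k. k \<in> set ks \<Longrightarrow> \<exists>i\<in>{1..n}. k \<in> Ks i"
proof -
  obtain ks where ks: "g = foldr (\<lambda>a b. a \<otimes>\<^bsub>G\<^esub> b) ks \<one>\<^bsub>G\<^esub>" "length ks = n * N"
    "\<forall>j < n * N. ks ! j \<in> Ks (j mod n + 1)"
    using assms(1) unfolding prod_power_set_def by blast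
  have "\<exists>i\<in>{1..n}. k \<in> Ks i" if k: "k \<in> set ks" for k
  proof -
    obtain j where "j < n * N" "k = ks ! j" using k ks(2) by (metis in_set_conv_nth)
    then have "k \<in> Ks (j mod n + 1)" using ks(3) by blast
    moreover have "j mod n + 1 \<in> {1..n}"
      using assms(2) by (simp add: Suc_leI)
    ultimately show ?thesis by blast
  qed
  with ks(1,2) show thesis by (rule that)
qed

lemma prod_power_set_displacement_le:
  assumes "monoid G"
    and unitary: "\<And>g. g \<in> carrier G \<Longrightarrow> unitary_op (\<tau> g)"
    and hom: "\<And>g h. g \<in> carrier G \<Longrightarrow> h \<in> carrier G \<Longrightarrow> \<tau> (g \<otimes>\<^bsub>G\<^esub> h) = \<tau> g \<circ> \<tau> h"
    and "\<tau> \<one>\<^bsub>G\<^esub> = id"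
    and "n \<ge> 1" and "g \<in> prod_power_set G Ks n N"
    and Ks_carrier: "\<And>i. i \<in> {1..n} \<Longrightarrow> Ks i \<subseteq> carrier G"
    and Ks_displacement: "\<And>i k. i \<in> {1..n} \<Longrightarrow> k \<in> Ks i \<Longrightarrow> norm (\<tau> k x - x) \<le> d"
  shows "norm (\<tau> g x - x) \<le> real (n * N) * d"
proof -
  obtain ks where ks: "g = foldr (\<lambda>a b. a \<otimes>\<^bsub>G\<^esub> b) ks \<one>\<^bsub>G\<^esub>" "length ks = n * N"
    "\<And>k. k \<in> set ks \<Longrightarrow> \<exists>i\<in>{1..n}. k \<in> Ks i"
    by (rule prod_power_set_word[OF assms(6,5)]) blast
  have "norm (\<tau> g x - x) \<le> real (length ks) * d"
    unfolding ks(1) using ks(3) Ks_carrier Ks_displacement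
    by (intro foldr_mult_displacement_le[OF assms(1-4)]) blast+
  then show ?thesis using ks(2) by simp
qed

lemma closest_point_orbit_hull_invariant:
  fixes G :: "('g, 'b) monoid_scheme" and \<tau> :: "'g \<Rightarrow> complex ^ 'n \<Rightarrow> complex ^ 'n"
    and x :: "complex ^ 'n"
  defines "Orb \<equiv> (\<lambda>h. \<tau> h x) ` carrier G"
  defines "C \<equiv> closure (convex hull Orb)"
  assumes "monoid G"
    and unitary: "\<And>g. g \<in> carrier G \<Longrightarrow> unitary_op (\<tau> g)"
    and hom: "\<And>g h. g \<in> carrier G \<Longrightarrow> h \<in> carrier G \<Longrightarrow> \<tau> (g \<otimes>\<^bsub>G\<^esub> h) = \<tau> g \<circ> \<tau> h"
    and g: "g \<in> carrier G"
  shows "\<tau> g (closest_point C 0) = closest_point C 0"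
proof -
  have "closed C" "convex C" unfolding C_def by (auto intro: convex_closure convex_convex_hull)
  have "C \<noteq> {}" unfolding C_def Orb_def using monoid.one_closed[OF \<open>monoid G\<close>] by auto
  have lin: "linear (\<tau> g)" using unitary_op_linear[OF unitary[OF g]] .
  have "\<tau> g ` Orb \<subseteq> Orb"
  proof
    fix v assume "v \<in> \<tau> g ` Orb"
    then obtain h where h: "h \<in> carrier G" "v = \<tau> g (\<tau> h x)" unfolding Orb_def by blast
    then have "v = \<tau> (g \<otimes>\<^bsub>G\<^esub> h) x" using hom[OF g] by simp
    then show "v \<in> Orb" unfolding Orb_def using monoid.m_closed[OF \<open>monoid G\<close> g h(1)] by blast
  qed
  then have "\<tau> g ` (convex hull Orb) \<subseteq> convex hull Orb"
    unfolding convex_hull_linear_image[OF lin] by (rule hull_mono)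
  then have "\<tau> g ` (convex hull Orb) \<subseteq> closure (convex hull Orb)"
    using closure_subset by blast
  moreover have "continuous_on (closure (convex hull Orb)) (\<tau> g)"
    using lin by (intro linear_continuous_on linear_conv_bounded_linear[THEN iffD1])
  ultimately have stable: "\<tau> g ` C \<subseteq> C"
    unfolding C_def using image_closure_subset closed_closure by blast
  define c where "c = closest_point C 0"
  have "c \<in> C" unfolding c_def using closest_point_in_set[OF \<open>closed C\<close> \<open>C \<noteq> {}\<close>] .
  have "\<forall>z\<in>C. dist 0 c \<le> dist 0 z"
    unfolding c_def using closest_point_exists(2)[OF \<open>closed C\<close> \<open>C \<noteq> {}\<close>] .
  moreover have "\<tau> g c \<in> C" using stable \<open>c \<in> C\<close> by blast
  moreover have "dist 0 (\<tau> g c) = dist 0 c" using unitary_op_norm[OF unitary[OF g]] by simp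
  ultimately have "\<tau> g c = closest_point C 0"
    by (intro closest_point_unique[OF \<open>convex C\<close> \<open>closed C\<close>]) auto
  then show ?thesis unfolding c_def .
qed

lemma norm_le_orbit_radius:
  fixes \<tau> :: "'g \<Rightarrow> complex ^ 'n \<Rightarrow> complex ^ 'n"
  assumes "monoid G"
    and unitary: "\<And>g. g \<in> carrier G \<Longrightarrow> unitary_op (\<tau> g)"
    and hom: "\<And>g h. g \<in> carrier G \<Longrightarrow> h \<in> carrier G \<Longrightarrow> \<tau> (g \<otimes>\<^bsub>G\<^esub> h) = \<tau> g \<circ> \<tau> h"
    and no_invariant: "\<And>v. (\<forall>g \<in> carrier G. \<tau> g v = v) \<Longrightarrow> v = 0"
    and orbit: "\<And>g. g \<in> carrier G \<Longrightarrow> norm (\<tau> g x - x) \<le> R"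
  shows "norm x \<le> R"
proof -
  define C where "C = closure (convex hull ((\<lambda>h. \<tau> h x) ` carrier G))"
  have "closed C" unfolding C_def by simp
  have "C \<noteq> {}" unfolding C_def using monoid.one_closed[OF \<open>monoid G\<close>] by auto
  have "closest_point C 0 = 0"
    using no_invariant closest_point_orbit_hull_invariant[OF assms(1-3)] unfolding C_def by blast
  then have "0 \<in> C" using closest_point_in_set[OF \<open>closed C\<close> \<open>C \<noteq> {}\<close>, of 0] by simp
  have "(\<lambda>h. \<tau> h x) ` carrier G \<subseteq> cball x R"
    using orbit by (auto simp: dist_norm norm_minus_commute)
  then have "C \<subseteq> cball x R"
    unfolding C_def by (intro closure_minimal hull_minimal) auto
  then show ?thesis using \<open>0 \<in> C\<close> by auto
qed

theorem lemma3p10: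
  fixes G :: "('g, 'b) monoid_scheme" and T :: "'g topology"
    and Ks :: "nat \<Rightarrow> 'g set" and n N :: nat
    and \<tau> :: "'g \<Rightarrow> complex ^ 'm \<Rightarrow> complex ^ 'm"
    and x :: "complex ^ 'm" and y :: "nat \<Rightarrow> complex ^ 'm"
  assumes "compact_group G T"
    and "n \<ge> 1"
    and "\<And>i. i \<in> {1..n} \<Longrightarrow> subgroup (Ks i) G"
    and "N \<ge> 1"
    and "carrier G = prod_power_set G Ks n N"
    and "unitary_rep G T \<tau>"
    and "\<And>v. (\<forall>g \<in> carrier G. \<tau> g v = v) \<Longrightarrow> v = 0"
    and "\<And>i g. i \<in> {1..n} \<Longrightarrow> g \<in> Ks i \<Longrightarrow> \<tau> g (y i) = y i"
  shows "norm x \<le> 2 * real n * real N * Max ((\<lambda>i. norm (x - y i)) ` {1..n})"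
proof -
  define e where "e = Max ((\<lambda>i. norm (x - y i)) ` {1..n})"
  have "monoid G" using assms(1) unfolding compact_group_def by (simp add: group.is_monoid)
  have unitary: "\<And>g. g \<in> carrier G \<Longrightarrow> unitary_op (\<tau> g)"
    and hom: "\<And>g h. g \<in> carrier G \<Longrightarrow> h \<in> carrier G \<Longrightarrow> \<tau> (g \<otimes>\<^bsub>G\<^esub> h) = \<tau> g \<circ> \<tau> h"
    and "\<tau> \<one>\<^bsub>G\<^esub> = id"
    using assms(6) unfolding unitary_rep_def by blast+
  have Ks_carrier: "Ks i \<subseteq> carrier G" if "i \<in> {1..n}" for i
    using assms(3)[OF that] subgroup.subset by blast
  have Ks_displacement: "norm (\<tau> k x - x) \<le> 2 * e" if "i \<in> {1..n}" "k \<in> Ks i" for i k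
  proof -
    have "norm (\<tau> k x - x) \<le> 2 * norm (x - y i)"
      using unitary Ks_carrier[OF that(1)] that assms(8) by (intro unitary_op_displacement_le) auto
    also have "\<dots> \<le> 2 * e" unfolding e_def using that(1) by (simp add: Max_ge)
    finally show ?thesis .
  qed
  have orbit: "norm (\<tau> g x - x) \<le> 2 * real n * real N * e" if "g \<in> carrier G" for g
  proof -
    have "norm (\<tau> g x - x) \<le> real (n * N) * (2 * e)"
      using that assms(5) Ks_carrier Ks_displacement
      by (intro prod_power_set_displacement_le[OF \<open>monoid G\<close> unitary hom \<open>\<tau> \<one>\<^bsub>G\<^esub> = id\<close> assms(2)])
        auto
    then show ?thesis by (simp add: algebra_simps)
  qed
  show ?thesis
    unfolding e_def[symmetric] using \<open>monoid G\<close> unitary hom assms(7) orbit by (rule norm_le_orbit_radius)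
qed

end
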